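(* Let $E=\bigcup_{i\in I}\gamma_i+B_i^\oplus$ be a semi-simple expression over $\mathbb{N}^k$ and let $n=|I|\cdot\|E\|$. For each $j\in\{1,\dots,k\}$ define $p_j=\operatorname{lcm}(m_1,\dots,m_{|I|})$, where (indexing $I=\{1,\dots,|I|\}$) $m_i=m$ if $m\mathbf{e}_j\in B_i$ and $m_i=1$ otherwise. Then $p_j=O\big(e^{\sqrt{n\log n}}\big)$.
   Context: $\mathbb{N}$ includes $0$; $\mathbf{e}_j$ is the $j$-th unit vector. For finite $B\subseteq\mathbb{N}^k$, $B^\oplus$ is the set of $\mathbb{N}$-linear combinations of elements of $B$ and $\gamma+B^\oplus=\{\gamma+\sigma:\sigma\in B^\oplus\}$. $B$ is free if every element of $B^\oplus$ has a unique representation as such a combination. A semi-simple expression is a finite union of expressions $\gamma_i+B_i^\oplus$ with $B_i$ free and denoted sets pairwise disjoint. For $\sigma=(b_1,\dots,b_k)$, $\|\sigma\|=\max_j b_j$; for $B\subseteq\mathbb{N}^k$, $\|B\|=\max_{\sigma\in B}\|\sigma\|$; and $\|E\|=\max(\max_{i\in I}\|\gamma_i\|,\max_{i\in I}\|B_i\|,2)$. (Each free basis $B_i$ contains at most one element of the form $m\mathbf{e}_j$ for fixed $j$.) *)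

theory Defs
  imports Complex_Main
begin

text \<open>Vectors of \<nat>^k are represented as functions nat \<Rightarrow> nat vanishing at
  coordinates \<ge> k (coordinates are 0-indexed: 0..k-1).\<close>

type_synonym vec = "nat \<Rightarrow> nat"

definition in_Nk :: "nat \<Rightarrow> vec \<Rightarrow> bool" where
  "in_Nk k v \<longleftrightarrow> (\<forall>i\<ge>k. v i = 0)"

definition unit_vec :: "nat \<Rightarrow> vec" where
  "unit_vec j = (\<lambda>i. if i = j then 1 else 0)"

definition lincomb :: "(vec \<Rightarrow> nat) \<Rightarrow> vec set \<Rightarrow> vec" where
  "lincomb c B = (\<lambda>i. \<Sum>b\<in>B. c b * b i)"

definition span_N :: "vec set \<Rightarrow> vec set" where
  "span_N B = {lincomb c B | c. True}"

definition linset :: "vec \<Rightarrow> vec set \<Rightarrow> vec set" where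
  "linset \<gamma> B = {(\<lambda>i. \<gamma> i + s i) | s. s \<in> span_N B}"

definition free_basis :: "vec set \<Rightarrow> bool" where
  "free_basis B \<longleftrightarrow> (\<forall>c c'. lincomb c B = lincomb c' B \<longrightarrow> (\<forall>b\<in>B. c b = c' b))"

text \<open>A semi-simple expression over \<nat>^k with index set I = {0..<t}:
  bases B i finite and free, all vectors in \<nat>^k, denoted sets pairwise disjoint.\<close>
definition semi_simple :: "nat \<Rightarrow> nat \<Rightarrow> (nat \<Rightarrow> vec) \<Rightarrow> (nat \<Rightarrow> vec set) \<Rightarrow> bool" where
  "semi_simple k t \<gamma> B \<longleftrightarrow>
     (\<forall>i<t. in_Nk k (\<gamma> i) \<and> finite (B i) \<and> (\<forall>b\<in>B i. in_Nk k b) \<and> free_basis (B i)) \<and>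
     (\<forall>i<t. \<forall>i'<t. i \<noteq> i' \<longrightarrow> linset (\<gamma> i) (B i) \<inter> linset (\<gamma> i') (B i') = {})"

definition vnorm :: "nat \<Rightarrow> vec \<Rightarrow> nat" where
  "vnorm k v = Max (insert 0 (v ` {..<k}))"

definition bnorm :: "nat \<Rightarrow> vec set \<Rightarrow> nat" where
  "bnorm k B = Max (insert 0 (vnorm k ` B))"

definition enorm :: "nat \<Rightarrow> nat \<Rightarrow> (nat \<Rightarrow> vec) \<Rightarrow> (nat \<Rightarrow> vec set) \<Rightarrow> nat" where
  "enorm k t \<gamma> B = Max ({2} \<union> (\<lambda>i. vnorm k (\<gamma> i)) ` {..<t} \<union> (\<lambda>i. bnorm k (B i)) ` {..<t})"

definition mult_j :: "vec set \<Rightarrow> nat \<Rightarrow> nat" where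
  "mult_j Bi j = (if \<exists>m. (\<lambda>x. m * unit_vec j x) \<in> Bi
                  then (THE m. (\<lambda>x. m * unit_vec j x) \<in> Bi) else 1)"

definition p_j :: "nat \<Rightarrow> (nat \<Rightarrow> vec set) \<Rightarrow> nat \<Rightarrow> nat" where
  "p_j t B j = Lcm ((\<lambda>i. mult_j (B i) j) ` {..<t})"

end

theory Submission
  imports Defs "HOL-Computational_Algebra.Primes"
begin

text \<open>Each m_i is at most N = \<parallel>E\<parallel> and there are at most t = |I| of them, so p_j is bounded both by
  N^t and by lcm(1, ..., N).  The latter is at most 4^N N^(\<surd>N): primes above \<surd>N occur in it only
  to the first power, and the product of all primes up to N is at most 4^N (Erdos' argument: the
  primes in (m + 1, 2m + 1] divide the binomial coefficient (2m + 1 choose m) \<le> 4^m).  Hence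
  ln p_j \<le> min (t ln N, N ln 4 + \<surd>N ln N).  If the first term exceeds S = \<surd>(tN ln (tN)), then t
  is so large compared with N / ln N that S \<ge> 1.55 N, which beats N ln 4 + \<surd>N ln N up to a
  constant.\<close>

lemma prod_primes_dvd:
  fixes x :: nat
  assumes "finite S" "\<And>p. p \<in> S \<Longrightarrow> prime p" "\<And>p. p \<in> S \<Longrightarrow> p dvd x" "x \<noteq> 0"
  shows "\<Prod>S dvd x"
proof -
  have "\<Prod>S = (\<Prod>p\<in>S. p ^ 1)" by simp
  also have "\<dots> dvd x"
  proof (rule multiplicity_le_imp_dvd)
    have "0 \<notin> S"
      using assms(2) not_prime_0 by blast
    then show "(\<Prod>p\<in>S. p ^ 1) \<noteq> 0"
      using assms(1) by simp
    fix q :: nat assume "prime q"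
    then show "multiplicity q (\<Prod>p\<in>S. p ^ 1) \<le> multiplicity q x"
      using assms by (subst multiplicity_prod_prime_powers) (auto intro!: multiplicity_geI)
  qed
  finally show ?thesis .
qed

lemma binomial_odd_middle_le: "(2 * m + 1) choose m \<le> 4 ^ m"
proof -
  have "2 * ((2 * m + 1) choose m) = (\<Sum>k\<in>{m, m + 1}. (2 * m + 1) choose k)"
    using binomial_symmetric[of m "2 * m + 1"] by simp
  also have "\<dots> \<le> (\<Sum>k\<le>2 * m + 1. (2 * m + 1) choose k)"
    by (intro sum_mono2) auto
  also have "\<dots> = 2 * 4 ^ m"
    unfolding choose_row_sum by (simp add: power_mult)
  finally show ?thesis by simp
qed

lemma prod_primes_between_dvd_binomial:
  "\<Prod>{p. prime p \<and> m + 1 < p \<and> p \<le> 2 * m + 1} dvd (2 * m + 1) choose m"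
proof (rule prod_primes_dvd)
  fix p assume p: "p \<in> {p. prime p \<and> m + 1 < p \<and> p \<le> 2 * m + 1}"
  have "p dvd fact (2 * m + 1)"
    using p prime_dvd_fact_iff[of p "2 * m + 1"] by blast
  also have "fact (2 * m + 1) = fact m * fact (m + 1) * ((2 * m + 1) choose m)"
    using binomial_fact_lemma[of m "2 * m + 1"] by (simp add: mult_2)
  finally have "p dvd fact m * fact (m + 1) * ((2 * m + 1) choose m)" .
  moreover have "\<not> p dvd fact m" "\<not> p dvd fact (m + 1)"
    using p prime_dvd_fact_iff[of p m] prime_dvd_fact_iff[of p "m + 1"] by auto
  ultimately show "p dvd (2 * m + 1) choose m"
    using p by (auto simp: prime_dvd_mult_iff)
qed (auto intro: finite_subset[of _ "{..2 * m + 1}"])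

theorem primorial_le_four_power: "\<Prod>{p::nat. prime p \<and> p \<le> n} \<le> 4 ^ n"
proof (induction n rule: less_induct)
  case (less n)
  show ?case
  proof (cases "n \<le> 2")
    case True
    then have primes: "{p::nat. prime p \<and> p \<le> n} = (if n = 2 then {2} else {})"
      by (auto dest: prime_ge_2_nat)
    show ?thesis
      unfolding primes by simp
  next
    case False
    consider "even n" | m where "n = 2 * m + 1"
      using oddE by blast
    then show ?thesis
    proof cases
      case 1
      have "\<not> prime n"
        using prime_odd_nat[of n] 1 False by auto
      then have "p \<le> n \<longleftrightarrow> p \<le> n - 1" if "prime p" for p
        using that by (cases "p = n") auto
      then have "{p. prime p \<and> p \<le> n} = {p. prime p \<and> p \<le> n - 1}"
        by blast
      then have "\<Prod>{p. prime p \<and> p \<le> n} \<le> 4 ^ (n - 1)"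
        using less[of "n - 1"] False by simp
      also have "\<dots> \<le> 4 ^ n"
        by (intro power_increasing) auto
      finally show ?thesis .
    next
      case 2
      let ?A = "{p. prime p \<and> p \<le> m + 1}"
      let ?B = "{p. prime p \<and> m + 1 < p \<and> p \<le> 2 * m + 1}"
      have "finite ?B"
        by (rule finite_subset[of _ "{..2 * m + 1}"]) auto
      then have "\<Prod>(?A \<union> ?B) = \<Prod>?A * \<Prod>?B"
        by (intro prod.union_disjoint) auto
      moreover have "{p. prime p \<and> p \<le> n} = ?A \<union> ?B"
        using 2 by auto
      ultimately have "\<Prod>{p. prime p \<and> p \<le> n} = \<Prod>?A * \<Prod>?B"
        by simp
      also have "\<dots> \<le> 4 ^ (m + 1) * 4 ^ m"
      proof (rule mult_le_mono)
        show "\<Prod>?A \<le> 4 ^ (m + 1)"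
          using less[of "m + 1"] 2 False by simp
        show "\<Prod>?B \<le> 4 ^ m"
          by (rule order_trans[OF dvd_imp_le[OF prod_primes_between_dvd_binomial]
                binomial_odd_middle_le]) simp
      qed
      also have "\<dots> = 4 ^ n"
        using 2 by (simp flip: power_add)
      finally show ?thesis .
    qed
  qed
qed

text \<open>For p \<ge> 2 the conjunct e \<le> N is implied by p^e \<le> N; it only keeps the set finite when p \<le> 1.\<close>
definition max_power_exponent :: "nat \<Rightarrow> nat \<Rightarrow> nat" where
  "max_power_exponent p N = Max {e. e \<le> N \<and> p ^ e \<le> N}"

lemma finite_power_le: "finite {e. e \<le> N \<and> p ^ e \<le> (N::nat)}"
  by (rule finite_subset[of _ "{..N}"]) auto

lemma max_power_exponent_le:
  assumes "N \<ge> 1"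
  shows "max_power_exponent p N \<le> N" "p ^ max_power_exponent p N \<le> N"
proof -
  have "0 \<in> {e. e \<le> N \<and> p ^ e \<le> N}"
    using assms by simp
  then have "max_power_exponent p N \<in> {e. e \<le> N \<and> p ^ e \<le> N}"
    unfolding max_power_exponent_def by (intro Max_in[OF finite_power_le]) auto
  then show "max_power_exponent p N \<le> N" "p ^ max_power_exponent p N \<le> N"
    by auto
qed

lemma le_max_power_exponent: "e \<le> N \<Longrightarrow> p ^ e \<le> N \<Longrightarrow> e \<le> max_power_exponent p N"
  unfolding max_power_exponent_def by (rule Max_ge[OF finite_power_le]) simp

lemma dvd_prod_max_prime_powers:
  fixes m N :: nat
  assumes m: "1 \<le> m" "m \<le> N"
  shows "m dvd (\<Prod>p | prime p \<and> p \<le> N. p ^ max_power_exponent p N)"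
proof (rule multiplicity_le_imp_dvd)
  show "m \<noteq> 0" using m by simp
  fix q :: nat assume q: "prime q"
  show "multiplicity q m \<le> multiplicity q (\<Prod>p | prime p \<and> p \<le> N. p ^ max_power_exponent p N)"
  proof (cases "multiplicity q m = 0")
    case False
    define e where "e = multiplicity q m"
    have "q ^ e dvd m"
      unfolding e_def by (rule multiplicity_dvd)
    then have "q ^ e \<le> m"
      using m by (intro dvd_imp_le) auto
    then have qe: "q ^ e \<le> N"
      using m by linarith
    have "q \<le> q ^ e"
      using False q unfolding e_def by (intro self_le_power prime_ge_1_nat) auto
    then have "q \<le> N" using qe by linarith
    have "e < 2 ^ e" by (rule less_exp)
    also have "\<dots> \<le> q ^ e"
      using prime_ge_2_nat[OF q] by (intro power_mono) auto
    finally have "e \<le> max_power_exponent q N"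
      using qe by (intro le_max_power_exponent) auto
    then show ?thesis
      using q \<open>q \<le> N\<close> unfolding e_def
      by (subst multiplicity_prod_prime_powers) auto
  qed simp
qed

lemma prime_power_le_sqr_bound:
  fixes p e N :: nat
  assumes "prime p" "p ^ e \<le> N"
  shows "p ^ e \<le> p * (if p * p \<le> N then N else 1)"
proof (cases "p * p \<le> N")
  case True
  have "N \<le> p * N"
    using prime_gt_0_nat[OF assms(1)] by simp
  then have "p ^ e \<le> p * N"
    using assms(2) by linarith
  then show ?thesis
    using True by simp
next
  case False
  have p2: "p \<ge> 2" using assms(1) prime_ge_2_nat by blast
  have "e \<le> 1"
  proof (rule ccontr)
    assume "\<not> e \<le> 1"
    then have "p ^ 2 \<le> p ^ e" using p2 by (intro power_increasing) auto
    then show False using assms(2) False by (simp add: power2_eq_square)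
  qed
  then have "p ^ e \<le> p ^ 1" using p2 by (intro power_increasing) auto
  then show ?thesis using False by simp
qed

lemma prod_max_prime_powers_le:
  fixes N :: nat
  assumes "N \<ge> 1"
  shows "(\<Prod>p | prime p \<and> p \<le> N. p ^ max_power_exponent p N)
           \<le> 4 ^ N * N ^ card {p. prime p \<and> p * p \<le> N}"
proof -
  define P where "P = {p::nat. prime p \<and> p \<le> N}"
  have sqr_primes: "{p \<in> P. p * p \<le> N} = {p. prime p \<and> p * p \<le> N}"
    unfolding P_def using le_square by (blast intro: order_trans)
  have "(\<Prod>p\<in>P. p ^ max_power_exponent p N) \<le> (\<Prod>p\<in>P. p * (if p * p \<le> N then N else 1))"
    by (intro prod_mono conjI zero_le prime_power_le_sqr_bound max_power_exponent_le(2)[OF assms])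
      (simp add: P_def)
  also have "\<dots> = \<Prod>P * (\<Prod>p\<in>P. if p * p \<le> N then N else 1)"
    by (simp add: prod.distrib)
  also have "(\<Prod>p\<in>P. if p * p \<le> N then N else 1) = (\<Prod>p\<in>{p \<in> P. p * p \<le> N}. N)"
    using prod.inter_filter[of P "\<lambda>_. N" "\<lambda>p. p * p \<le> N"] by (simp add: P_def)
  also have "\<dots> = N ^ card {p. prime p \<and> p * p \<le> N}"
    by (simp only: sqr_primes prod_constant)
  also have "\<Prod>P * N ^ card {p. prime p \<and> p * p \<le> N}
      \<le> 4 ^ N * N ^ card {p. prime p \<and> p * p \<le> N}"
    unfolding P_def by (intro mult_right_mono primorial_le_four_power) simp
  finally show ?thesis unfolding P_def .
qed

lemma Lcm_le_power_card:
  fixes M :: "nat set"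
  assumes "finite M" "M \<subseteq> {1..N}"
  shows "Lcm M \<le> N ^ card M"
proof -
  have "Lcm M \<le> \<Prod>M"
    using assms by (intro dvd_imp_le Lcm_least dvd_prodI) (auto simp: prod_pos)
  also have "\<dots> \<le> (\<Prod>m\<in>M. N)"
    using assms by (intro prod_mono) auto
  finally show ?thesis by simp
qed

lemma Lcm_le_four_power_mult:
  fixes M :: "nat set"
  assumes "M \<subseteq> {1..N}" "N \<ge> 1"
  shows "Lcm M \<le> 4 ^ N * N ^ card {p. prime p \<and> p * p \<le> N}"
proof -
  have "Lcm M \<le> (\<Prod>p | prime p \<and> p \<le> N. p ^ max_power_exponent p N)"
    using assms dvd_prod_max_prime_powers
    by (intro dvd_imp_le Lcm_least) (auto simp: prime_gt_0_nat)
  then show ?thesis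
    using prod_max_prime_powers_le[OF assms(2)] by linarith
qed

lemma card_primes_sqr_le_sqrt: "real (card {p::nat. prime p \<and> p * p \<le> N}) \<le> sqrt N"
proof -
  define r where "r = nat \<lfloor>sqrt N\<rfloor>"
  have "{p::nat. prime p \<and> p * p \<le> N} \<subseteq> {1..r}"
  proof
    fix p assume p: "p \<in> {p::nat. prime p \<and> p * p \<le> N}"
    then have "real p * real p \<le> real N"
      by (simp flip: of_nat_mult)
    then have "real p \<le> sqrt N"
      by (simp add: real_le_rsqrt power2_eq_square)
    then show "p \<in> {1..r}"
      using p prime_ge_1_nat unfolding r_def by (auto simp: le_nat_floor)
  qed
  then have "card {p::nat. prime p \<and> p * p \<le> N} \<le> r"
    using card_mono[of "{1..r}"] by fastforce
  also have "real r \<le> sqrt N"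
    unfolding r_def by simp
  finally show ?thesis by simp
qed

lemma ln_4_le: "ln (4::real) \<le> 36 / 25"
proof -
  have "1 + 9 / 25 + (9 / 25)\<^sup>2 / 2 \<le> exp (9 / 25 :: real)"
    by (rule exp_lower_Taylor_quadratic) simp
  then have "(71 / 50) ^ 4 \<le> exp (9 / 25 :: real) ^ 4"
    by (intro power_mono) (auto simp: power2_eq_square)
  also have "\<dots> = exp (36 / 25)"
    by (simp flip: exp_of_nat_mult)
  finally have "4 \<le> exp (36 / 25 :: real)"
    by (simp add: eval_nat_numeral)
  then have "ln 4 \<le> ln (exp (36 / 25 :: real))"
    by (subst ln_le_cancel_iff) auto
  then show ?thesis
    by simp
qed

lemma ln_le_9_20_mult:
  fixes a :: real
  assumes "0 < a"
  shows "ln a \<le> 9 / 20 * a"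
proof -
  \<comment> \<open>the difference is 81/800 (a - 220/81)^2 + 41/162\<close>
  have "a \<le> 1 + 9 / 20 * a + (9 / 20 * a)\<^sup>2 / 2"
    using zero_le_power2[of "a - 220 / 81"] by (simp add: power2_eq_square field_simps)
  also have "\<dots> \<le> exp (9 / 20 * a)"
    using assms by (intro exp_lower_Taylor_quadratic) simp
  finally have "ln a \<le> ln (exp (9 / 20 * a))"
    using assms by (subst ln_le_cancel_iff) auto
  then show ?thesis
    by simp
qed

lemma sqrt_mult_ln_le:
  fixes x :: real
  assumes "1 \<le> x"
  shows "sqrt x * ln x \<le> 3 / 40 * x + 60000"
proof -
  define u where "u = sqrt x"
  have u: "1 \<le> u" "x = u\<^sup>2"
    using assms unfolding u_def by auto
  have "ln (u / 40) \<le> u / 40 - 1"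
    using u by (intro ln_le_minus_one) simp
  moreover have "ln (u / 40) = ln u - ln 40"
    using u by (simp add: ln_div)
  moreover have "ln (40::real) \<le> 40 - 1"
    by (intro ln_le_minus_one) simp
  ultimately have "ln u \<le> u / 40 + 38"
    by linarith
  moreover have "sqrt x * ln x = 2 * u * ln u"
    using u(1) unfolding u(2) by (simp add: ln_realpow)
  ultimately have "sqrt x * ln x \<le> 2 * u * (u / 40 + 38)"
    using u by (simp add: mult_left_mono)
  also have "\<dots> \<le> 3 / 40 * u\<^sup>2 + 60000"
    using zero_le_power2[of "u - 1520"] by (simp add: power2_eq_square algebra_simps)
  finally show ?thesis
    using u by simp
qed

text \<open>With a = ln x and L = ln (T x), the hypothesis gives x L < T a^2, hence x < T a.  Then
  L > ln (x^2 / a) = 2a - ln a \<ge> 1.55 a, and feeding this back gives T a > 1.55 x and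
  T x L \<ge> (1.55 x)^2.\<close>
lemma sqrt_mult_ln_ge_of_less:
  fixes x T :: real
  assumes x: "2 \<le> x" and T: "1 \<le> T" and less: "sqrt (T * x * ln (T * x)) < T * ln x"
  shows "31 / 20 * x \<le> sqrt (T * x * ln (T * x))"
proof -
  define a where "a = ln x"
  define L where "L = ln (T * x)"
  have a: "0 < a"
    using x by (simp add: a_def)
  have L: "a \<le> L"
    using x T by (simp add: a_def L_def ln_mult)
  have "0 \<le> T * x * L"
    using x T a L by simp
  moreover have "sqrt (T * x * L) < T * a"
    using less by (simp add: a_def L_def)
  ultimately have "(sqrt (T * x * L))\<^sup>2 < (T * a)\<^sup>2"
    by (intro power_strict_mono) simp_all
  then have "T * (x * L) < T * (T * a * a)"
    using x T a L by (simp add: power2_eq_square algebra_simps)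
  then have small: "x * L < T * a * a"
    using T by simp
  have "x * a \<le> x * L"
    using x L by simp
  with small have "x * a < (T * a) * a"
    by linarith
  then have "x < T * a"
    using mult_less_cancel_right_pos[OF a] by blast
  then have "x * x / a < T * x"
    using x a by (simp add: field_simps)
  moreover have "0 < x * x / a" "0 < T * x"
    using x a T by auto
  ultimately have "ln (x * x / a) < L"
    unfolding L_def by simp
  moreover have "ln (x * x / a) = 2 * a - ln a"
    using x a by (simp add: a_def ln_div ln_mult)
  ultimately have L155: "31 / 20 * a \<le> L"
    using ln_le_9_20_mult[OF a] by simp
  moreover have "x * (31 / 20 * a) \<le> x * L"
    using x L155 by (intro mult_left_mono) simp_all
  ultimately have "x * (31 / 20 * a) < T * a * a"
    using small by linarith
  then have Ta: "31 / 20 * x < T * a"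
    using a by (simp add: algebra_simps)
  have "(31 / 20 * x)\<^sup>2 \<le> (T * a) * x * (31 / 20)"
    using Ta x by (simp add: power2_eq_square)
  also have "\<dots> = T * x * (31 / 20 * a)"
    by (simp add: algebra_simps)
  also have "\<dots> \<le> T * x * L"
    using L155 T x by (intro mult_left_mono) auto
  finally show ?thesis
    unfolding L_def by (rule real_le_rsqrt)
qed

lemma le_sqrt_mult_ln_add_const:
  fixes x T l :: real
  assumes x: "2 \<le> x" and T: "1 \<le> T"
    and l: "l \<le> T * ln x" "l \<le> x * ln 4 + sqrt x * ln x"
  shows "l \<le> sqrt (T * x * ln (T * x)) + 60000"
proof (cases "sqrt (T * x * ln (T * x)) < T * ln x")
  case True
  then have "31 / 20 * x \<le> sqrt (T * x * ln (T * x))"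
    using sqrt_mult_ln_ge_of_less x T by blast
  moreover have "x * ln 4 \<le> x * (36 / 25)"
    using x by (intro mult_left_mono[OF ln_4_le]) simp
  moreover have "sqrt x * ln x \<le> 3 / 40 * x + 60000"
    using x by (intro sqrt_mult_ln_le) simp
  ultimately show ?thesis
    using l x by linarith
qed (use l in linarith)

lemma Lcm_le_exp_sqrt_mult_ln:
  fixes M :: "nat set"
  assumes fin: "finite M" and M: "M \<subseteq> {1..N}" and card: "card M \<le> t" and N: "2 \<le> N"
  shows "real (Lcm M) \<le> exp 60000 * exp (sqrt (real (t * N) * ln (real (t * N))))"
proof (cases "t = 0")
  case True
  then show ?thesis
    using fin card by simp
next
  case False
  have "0 \<notin> M"
    using M by auto
  then have "Lcm M \<noteq> 0"
    using fin Lcm_0_iff by blast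
  then have pos: "0 < real (Lcm M)"
    by simp
  define l where "l = ln (real (Lcm M))"
  have "N ^ card M \<le> N ^ t"
    using card N by (intro power_increasing) auto
  then have "Lcm M \<le> N ^ t"
    using Lcm_le_power_card[OF fin M] by linarith
  then have "l \<le> ln (real (N ^ t))"
    unfolding l_def using pos by (intro ln_mono) simp_all
  then have l1: "l \<le> real t * ln N"
    by (simp add: ln_realpow)
  have "Lcm M \<le> 4 ^ N * N ^ card {p. prime p \<and> p * p \<le> N}"
    using Lcm_le_four_power_mult[OF M] N by simp
  then have "l \<le> ln (real (4 ^ N * N ^ card {p. prime p \<and> p * p \<le> N}))"
    unfolding l_def using pos by (intro ln_mono) (simp_all only: of_nat_le_iff)
  also have "\<dots> = N * ln 4 + card {p. prime p \<and> p * p \<le> N} * ln N"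
    using N by (simp add: ln_mult ln_realpow)
  also have "\<dots> \<le> N * ln 4 + sqrt N * ln N"
    using card_primes_sqr_le_sqrt[of N] N by (intro add_left_mono mult_right_mono) auto
  finally have "l \<le> sqrt (real t * N * ln (real t * N)) + 60000"
    using le_sqrt_mult_ln_add_const[OF _ _ l1] N False by simp
  then have "exp l \<le> exp (60000 + sqrt (real (t * N) * ln (real (t * N))))"
    by simp
  then show ?thesis
    using pos by (simp add: l_def exp_add)
qed

lemma lincomb_single:
  assumes "finite B" "u \<in> B"
  shows "lincomb (\<lambda>b. if b = u then a else 0) B = (\<lambda>i. a * u i)"
proof
  fix i
  have "(\<Sum>b\<in>B. (if b = u then a else 0) * b i) = (\<Sum>b\<in>B. if b = u then a * u i else 0)"
    by (intro sum.cong) auto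
  then show "lincomb (\<lambda>b. if b = u then a else 0) B i = a * u i"
    using assms by (simp add: lincomb_def)
qed

lemma free_basis_nonzero:
  assumes "finite B" "free_basis B" "u \<in> B"
  shows "u \<noteq> (\<lambda>_. 0)"
proof
  assume "u = (\<lambda>_. 0)"
  then have "lincomb (\<lambda>b. if b = u then 1 else 0) B = lincomb (\<lambda>b. if b = u then 0 else 0) B"
    using lincomb_single[OF assms(1,3), of 1] lincomb_single[OF assms(1,3), of 0] by simp
  then show False
    using assms(2,3) unfolding free_basis_def by fastforce
qed

lemma free_basis_scaled_unit_unique:
  assumes fin: "finite B" and free: "free_basis B"
    and mu: "(\<lambda>x. m * unit_vec j x) \<in> B" and mv: "(\<lambda>x. m' * unit_vec j x) \<in> B"
  shows "m = m'"
proof (rule ccontr)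
  assume "m \<noteq> m'"
  define u where "u = (\<lambda>x. m * unit_vec j x)"
  define v where "v = (\<lambda>x. m' * unit_vec j x)"
  have "u \<noteq> v"
    using \<open>m \<noteq> m'\<close> unfolding u_def v_def by (metis mult.right_neutral unit_vec_def)
  have "m' \<noteq> 0"
    using free_basis_nonzero[OF fin free mv] by auto
  have "lincomb (\<lambda>b. if b = u then m' else 0) B = (\<lambda>i. m' * u i)"
    using mu unfolding u_def by (rule lincomb_single[OF fin])
  also have "\<dots> = (\<lambda>i. m * v i)"
    unfolding u_def v_def by (simp add: mult.left_commute)
  also have "\<dots> = lincomb (\<lambda>b. if b = v then m else 0) B"
    using mv unfolding v_def by (rule lincomb_single[OF fin, symmetric])
  finally have "(if u = u then m' else 0) = (if u = v then m else 0)"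
    using free mu unfolding free_basis_def u_def by blast
  then show False
    using \<open>u \<noteq> v\<close> \<open>m' \<noteq> 0\<close> by simp
qed

lemma mult_j_eq:
  assumes "finite B" "free_basis B" "(\<lambda>x. m * unit_vec j x) \<in> B"
  shows "mult_j B j = m"
proof -
  have "(THE m. (\<lambda>x. m * unit_vec j x) \<in> B) = m"
    using assms free_basis_scaled_unit_unique by (intro the_equality) blast+
  then show ?thesis
    using assms(3) unfolding mult_j_def by auto
qed

lemma enorm_ge_2: "2 \<le> enorm k t \<gamma> B"
  unfolding enorm_def by (intro Max_ge) auto

lemma mult_j_bounds:
  assumes ss: "semi_simple k t \<gamma> B" and i: "i < t" and j: "j < k"
  shows "mult_j (B i) j \<in> {1..enorm k t \<gamma> B}"
proof (cases "\<exists>m. (\<lambda>x. m * unit_vec j x) \<in> B i")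
  case False
  then show ?thesis
    using enorm_ge_2[of k t \<gamma> B] unfolding mult_j_def by simp
next
  case True
  then obtain m where m: "(\<lambda>x. m * unit_vec j x) \<in> B i"
    by blast
  have fin: "finite (B i)" and free: "free_basis (B i)"
    using ss i unfolding semi_simple_def by blast+
  have "m \<noteq> 0"
    using free_basis_nonzero[OF fin free m] by auto
  have "m \<le> vnorm k (\<lambda>x. m * unit_vec j x)"
    unfolding vnorm_def using j by (intro Max_ge) (auto simp: unit_vec_def intro!: image_eqI[of _ _ j])
  also have "\<dots> \<le> bnorm k (B i)"
    unfolding bnorm_def using fin m by (intro Max_ge) auto
  also have "\<dots> \<le> enorm k t \<gamma> B"
    unfolding enorm_def using i by (intro Max_ge) auto
  finally show ?thesis
    using mult_j_eq[OF fin free m] \<open>m \<noteq> 0\<close> by simp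
qed

theorem mainTheorem9:
  shows "\<exists>C>0. \<forall>k t \<gamma> B j. semi_simple k t \<gamma> B \<longrightarrow> j < k \<longrightarrow>
           real (p_j t B j) \<le>
             C * exp (sqrt (real (t * enorm k t \<gamma> B) * ln (real (t * enorm k t \<gamma> B))))"
proof (intro exI[of _ "exp 60000"] conjI allI impI)
  show "(0::real) < exp 60000"
    by simp
  fix k t \<gamma> B j
  assume ss: "semi_simple k t \<gamma> B" and j: "j < k"
  let ?M = "(\<lambda>i. mult_j (B i) j) ` {..<t}"
  have "?M \<subseteq> {1..enorm k t \<gamma> B}"
    using mult_j_bounds[OF ss _ j] by auto
  moreover have "card ?M \<le> t"
    using card_image_le[of "{..<t}"] by simp
  ultimately show "real (p_j t B j)
      \<le> exp 60000 * exp (sqrt (real (t * enorm k t \<gamma> B) * ln (real (t * enorm k t \<gamma> B))))"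
    unfolding p_j_def by (intro Lcm_le_exp_sqrt_mult_ln enorm_ge_2) auto
qed

end
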